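(* For every $s>0$ there are constants $c,C>0$ such that for every locally constant function $f:\mathbb{Z}_2\to\mathbb{C}$, $$c\,N_s(f)\le \|f\|_{H^s(\mathbb{Z}_2)}\le C\,N_s(f),\qquad N_s(f)=\|f\|_{L^2(\mathbb{Z}_2)}+\left(\int_{\mathbb{Z}_2}\int_{\mathbb{Z}_2}\frac{|f(x)-f(y)|^2}{|x-y|_2^{1+2s}}\,d\mu(x)\,d\mu(y)\right)^{1/2}.$$
   Context: $\mathbb{Z}_2$ is the ring of 2-adic integers with 2-adic absolute value $|\cdot|_2$ and Haar probability measure $\mu$. $\Lambda=\mathbb{Q}_2/\mathbb{Z}_2$; $\mathcal F(f)(\lambda)=\int_{\mathbb{Z}_2}e^{-2i\pi\lambda x}f(x)\,d\mu(x)$; $\|f\|_{H^s(\mathbb{Z}_2)}=\big(\sum_{\lambda\in\Lambda}(1+|\lambda|_2)^{2s}|\mathcal F(f)(\lambda)|^2\big)^{1/2}$. *)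

theory Defs
  imports "HOL-Probability.Probability"
begin

text \<open>Model: a 2-adic integer x = sum_i x_i 2^i is represented by its digit
  sequence, a function nat \<Rightarrow> bool.  This is a homeomorphism of Z_2 onto the
  Cantor space, and the Haar probability measure corresponds to the infinite
  product of fair Bernoulli measures on the digits.\<close>

type_synonym Z2 = "nat \<Rightarrow> bool"

definition haar2 :: "Z2 measure" where
  "haar2 = (\<Pi>\<^sub>M i\<in>(UNIV::nat set). measure_pmf (bernoulli_pmf (1/2)))"

text \<open>x mod 2^n as a natural number.\<close>
definition trunc2 :: "nat \<Rightarrow> Z2 \<Rightarrow> nat" where
  "trunc2 n x = (\<Sum>i<n. if x i then 2 ^ i else 0)"

text \<open>|x - y|_2 = 2^(-v) with v the 2-adic valuation of x - y, i.e. the first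
  digit where x and y differ; 0 if x = y.\<close>
definition abs2_diff :: "Z2 \<Rightarrow> Z2 \<Rightarrow> real" where
  "abs2_diff x y = (if x = y then 0 else 2 powr (- real (LEAST i. x i \<noteq> y i)))"

text \<open>Locally constant: every point has a ball (x + 2^n Z_2) on which f is constant.\<close>
definition locally_constant2 :: "(Z2 \<Rightarrow> 'b) \<Rightarrow> bool" where
  "locally_constant2 f \<longleftrightarrow> (\<forall>x. \<exists>n. \<forall>y. (\<forall>i<n. y i = x i) \<longrightarrow> f y = f x)"

text \<open>The dual group Lambda = Q_2/Z_2: its elements are a/2^n with n = 0, a = 0,
  or n \<ge> 1 and a odd, 0 < a < 2^n; encoded as the pair (n,a). Then |a/2^n|_2 = 2^n
  and (a/2^n) x = a (x mod 2^n) / 2^n modulo 1.\<close>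
definition Lambda2 :: "(nat \<times> nat) set" where
  "Lambda2 = {(n, a). (n = 0 \<and> a = 0) \<or> (1 \<le> n \<and> odd a \<and> a < 2 ^ n)}"

definition lam_abs2 :: "nat \<times> nat \<Rightarrow> real" where
  "lam_abs2 l = (if fst l = 0 then 0 else 2 ^ fst l)"

definition fourier2 :: "(Z2 \<Rightarrow> complex) \<Rightarrow> nat \<times> nat \<Rightarrow> complex" where
  "fourier2 f l = (LINT x|haar2. exp (- 2 * pi * \<i> *
      of_real (real (snd l) * real (trunc2 (fst l) x) / 2 ^ fst l)) * f x)"

definition Hs_norm2 :: "real \<Rightarrow> (Z2 \<Rightarrow> complex) \<Rightarrow> real" where
  "Hs_norm2 s f = sqrt (\<Sum>\<^sub>\<infinity>l\<in>Lambda2. (1 + lam_abs2 l) powr (2 * s) * (cmod (fourier2 f l))\<^sup>2)"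

definition L2_norm2 :: "(Z2 \<Rightarrow> complex) \<Rightarrow> real" where
  "L2_norm2 f = sqrt (LINT x|haar2. (cmod (f x))\<^sup>2)"

definition Ns2 :: "real \<Rightarrow> (Z2 \<Rightarrow> complex) \<Rightarrow> real" where
  "Ns2 s f = L2_norm2 f + sqrt (LINT x|haar2. LINT y|haar2.
       (cmod (f x - f y))\<^sup>2 / abs2_diff x y powr (1 + 2 * s))"

end

theory Submission
  imports Defs
begin

(*
  Group the Fourier coefficients of f by level: P_n is the sum of |F f(a/2^n)|^2 over odd
  a < 2^n (and P_0 = |F f(0)|^2). Orthogonality of the characters of level n gives
    P_0 + ... + P_n = 2^n * (double integral of f(x) conj(f(y)) over |x - y|_2 <= 2^-n),
  so the mean square oscillation of f over pairs at distance at most 2^-k is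
  2^(1-k) * (sum of P_m over m > k). Since |x - y|_2^-(1+2s) is constant on the shells
  |x - y|_2 = 2^-k, the Gagliardo double integral equals
  sum_k 2^(2sk) (sum_{m>k} P_m + P_(k+1)) = sum_m g_m P_m with g_m comparable to 2^(2sm),
  while ||f||^2 in H^s is sum_m (1 + 2^m)^(2s) P_m: two weighted sums of the same nonnegative
  P_m with comparable weights. By compactness of Z_2 a locally constant f depends on finitely
  many digits only, so all sums are finite and every double integral is a finite average.
*)

section \<open>Digit expansions\<close>

definition nat_digits :: "nat \<Rightarrow> Z2" where
  "nat_digits j = (\<lambda>i. odd (j div 2 ^ i))"

lemma trunc2_Suc: "trunc2 (Suc n) x = trunc2 n x + (if x n then 2 ^ n else 0)"
  by (simp add: trunc2_def)

lemma trunc2_less: "trunc2 n x < 2 ^ n"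
  by (induction n) (simp_all add: trunc2_def)

lemma trunc2_cong: "(\<And>i. i < n \<Longrightarrow> x i = y i) \<Longrightarrow> trunc2 n x = trunc2 n y"
  by (simp add: trunc2_def)

lemma trunc2_nat_digits: "trunc2 n (nat_digits j) = j mod 2 ^ n"
proof (induction n)
  case 0
  then show ?case by (simp add: trunc2_def)
next
  case (Suc n)
  have "j mod 2 ^ Suc n = 2 ^ n * (j div 2 ^ n mod 2) + j mod 2 ^ n"
    using mod_mult2_eq'[of j "2 ^ n" 2] by (simp add: mult.commute)
  then show ?case
    using Suc by (simp add: trunc2_Suc nat_digits_def odd_iff_mod_2_eq_one)
qed

lemma nat_digits_trunc2: "i < n \<Longrightarrow> nat_digits (trunc2 n x) i = x i"
proof (induction n)
  case 0
  then show ?case by simp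
next
  case (Suc n)
  show ?case
  proof (cases "i = n")
    case True
    have "trunc2 (Suc n) x div 2 ^ n = (if x n then 1 else 0)"
      using trunc2_less[of n x] by (auto simp: trunc2_Suc)
    then show ?thesis using True by (simp add: nat_digits_def)
  next
    case False
    with Suc.prems have i: "i < n" by simp
    define c where "c = (if x n then 2 ^ (n - i) else (0::nat))"
    have "trunc2 (Suc n) x = trunc2 n x + c * 2 ^ i"
      using i by (simp add: trunc2_Suc c_def power_add[symmetric])
    then have "trunc2 (Suc n) x div 2 ^ i = c + trunc2 n x div 2 ^ i"
      by simp
    moreover have "even c" using i by (simp add: c_def)
    ultimately show ?thesis using Suc.IH[OF i] by (simp add: nat_digits_def)
  qed
qed

lemma trunc2_nat_digits_trunc2: "k \<le> M \<Longrightarrow> trunc2 k (nat_digits (trunc2 M x)) = trunc2 k x"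
  by (intro trunc2_cong) (simp add: nat_digits_trunc2)

lemma trunc2_eq_iff: "trunc2 n x = trunc2 n y \<longleftrightarrow> (\<forall>i<n. x i = y i)"
  by (metis trunc2_cong nat_digits_trunc2)

section \<open>Cylinders and the Haar measure\<close>

(* cylinder k x is the ball {y. |x - y|_2 <= 2^-k}. *)

definition cylinder :: "nat \<Rightarrow> Z2 \<Rightarrow> Z2 set" where
  "cylinder k x = {y. \<forall>i<k. y i = x i}"

lemma mem_cylinder_iff_trunc2: "y \<in> cylinder k x \<longleftrightarrow> trunc2 k y = trunc2 k x"
  by (simp add: cylinder_def trunc2_eq_iff)

lemma mem_cylinder_commute: "y \<in> cylinder k x \<longleftrightarrow> x \<in> cylinder k y"
  by (auto simp: cylinder_def)

lemma mem_cylinder_iff_le_Least: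
  assumes "x \<noteq> y"
  shows "y \<in> cylinder k x \<longleftrightarrow> k \<le> (LEAST i. x i \<noteq> y i)"
proof -
  define v where "v = (LEAST i. x i \<noteq> y i)"
  have "x v \<noteq> y v"
    unfolding v_def by (rule LeastI_ex) (use assms in auto)
  moreover have "x i = y i" if "i < v" for i
    using not_less_Least[OF that[unfolded v_def]] by blast
  ultimately show ?thesis
    unfolding v_def[symmetric] by (cases "k \<le> v") (auto simp: cylinder_def not_le)
qed

lemma abs2_diff_powr:
  assumes "x \<noteq> y"
  shows "abs2_diff x y powr a = inverse (2 powr (a * (LEAST i. x i \<noteq> y i)))"
proof -
  have "abs2_diff x y powr a = 2 powr (- real (LEAST i. x i \<noteq> y i) * a)"
    using assms by (simp only: abs2_diff_def if_False powr_powr)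
  also have "- real (LEAST i. x i \<noteq> y i) * a = - (a * real (LEAST i. x i \<noteq> y i))"
    by simp
  finally show ?thesis
    by (simp only: powr_minus)
qed

lemma space_haar2 [simp]: "space haar2 = UNIV"
  by (simp add: haar2_def space_PiM)

lemma cylinder_prod_emb:
  "cylinder k x = prod_emb UNIV (\<lambda>_. measure_pmf (bernoulli_pmf (1/2))) {..<k} (\<Pi>\<^sub>E i\<in>{..<k}. {x i})"
  unfolding cylinder_def prod_emb_def space_PiM PiE_UNIV
  by (auto simp: restrict_def PiE_iff extensional_def)

lemma sets_cylinder [simp]: "cylinder k x \<in> sets haar2"
  unfolding cylinder_prod_emb haar2_def
  by (rule measurable_prod_emb) (auto intro!: sets_PiM_I_finite)

lemma emeasure_cylinder: "emeasure haar2 (cylinder k x) = ennreal ((1/2) ^ k)"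
proof -
  have "emeasure haar2 (cylinder k x) =
      (\<Prod>i<k. emeasure (measure_pmf (bernoulli_pmf (1/2))) {x i})"
    unfolding cylinder_prod_emb haar2_def
    by (rule emeasure_PiM_emb) (auto simp: prob_space_measure_pmf)
  also have "\<dots> = (\<Prod>i<k. ennreal (1/2))"
    by (intro prod.cong refl) (simp add: emeasure_pmf_single)
  also have "\<dots> = ennreal ((1/2) ^ k)"
    by (simp add: ennreal_power[symmetric])
  finally show ?thesis .
qed

lemma measure_cylinder: "measure haar2 (cylinder k x) = (1/2) ^ k"
  using emeasure_cylinder by (simp add: measure_def del: power_one_over)

lemma integrable_indicator_cylinder [simp]:
  "integrable haar2 (indicator (cylinder k x) :: Z2 \<Rightarrow> real)"
  by (rule integrable_real_indicator) (simp_all add: emeasure_cylinder del: power_one_over)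

lemma integral_indicator_cylinder_scaleR:
  fixes c :: "'a::{banach,second_countable_topology}"
  shows "(LINT y|haar2. indicator (cylinder k x) y *\<^sub>R c) = (1/2) ^ k *\<^sub>R c"
  by (subst integral_scaleR_left) (simp_all add: measure_cylinder del: power_one_over)

lemma integral_indicator_cylinder_times:
  fixes c :: "'a::{real_normed_field,banach,second_countable_topology}"
  shows "(LINT y|haar2. indicator (cylinder k x) y * c) = (1/2) ^ k * c"
proof -
  have "(LINT y|haar2. indicator (cylinder k x) y * c) = (LINT y|haar2. indicator (cylinder k x) y *\<^sub>R c)"
    by (intro Bochner_Integration.integral_cong refl) (simp add: indicator_def)
  also have "\<dots> = (1/2) ^ k *\<^sub>R c"
    by (rule integral_indicator_cylinder_scaleR)
  finally show ?thesis
    by (simp add: scaleR_conv_of_real)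
qed

lemma compact_UNIV_digits: "compact (UNIV :: Z2 set)"
proof -
  have "compact_space (euclidean :: bool topology)"
    by (simp add: compact_space_def finite_imp_compact)
  then have "compact_space (product_topology (\<lambda>_::nat. euclidean :: bool topology) UNIV)"
    by (simp add: compact_space_product_topology)
  then show ?thesis
    by (simp add: euclidean_product_topology compact_space_def)
qed

lemma open_cylinder: "open (cylinder k x)"
proof -
  have "open {y :: Z2. \<forall>i\<in>{..<k}. y (id i) \<in> {x i}}"
    by (rule product_topology_basis') (simp_all add: discrete_topology_class.open_discrete)
  then show ?thesis by (simp add: cylinder_def Ball_def)
qed

section \<open>Functions depending on finitely many digits\<close>

definition depends_on_digits :: "nat \<Rightarrow> (Z2 \<Rightarrow> 'a) \<Rightarrow> bool" where
  "depends_on_digits M g \<longleftrightarrow> (\<forall>x y. (\<forall>i<M. x i = y i) \<longrightarrow> g x = g y)"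

lemma depends_on_digitsI:
  "(\<And>x y. (\<And>i. i < M \<Longrightarrow> x i = y i) \<Longrightarrow> g x = g y) \<Longrightarrow> depends_on_digits M g"
  unfolding depends_on_digits_def by blast

lemma depends_on_digitsD:
  "depends_on_digits M g \<Longrightarrow> (\<And>i. i < M' \<Longrightarrow> x i = y i) \<Longrightarrow> M \<le> M' \<Longrightarrow> g x = g y"
  unfolding depends_on_digits_def by auto

lemma depends_on_digits_nat_digits_trunc2:
  "depends_on_digits N g \<Longrightarrow> N \<le> M \<Longrightarrow> g (nat_digits (trunc2 M x)) = g x"
  by (erule depends_on_digitsD) (simp_all add: nat_digits_trunc2)

lemma depends_on_digits_comp2:
  "depends_on_digits M g \<Longrightarrow> depends_on_digits M h \<Longrightarrow> depends_on_digits M (\<lambda>x. F (g x) (h x))"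
  unfolding depends_on_digits_def by metis

lemma locally_constant2_depends_on_digits:
  assumes "locally_constant2 f"
  obtains N where "depends_on_digits N f"
proof -
  have "\<forall>x. \<exists>n. \<forall>y. y \<in> cylinder n x \<longrightarrow> f y = f x"
    using assms by (simp add: locally_constant2_def cylinder_def)
  then obtain n where n: "\<And>x y. y \<in> cylinder (n x) x \<Longrightarrow> f y = f x"
    by (metis choice)
  obtain C where "finite C" and cover: "UNIV \<subseteq> (\<Union>x\<in>C. cylinder (n x) x)"
  proof (rule compactE_image[OF compact_UNIV_digits, of UNIV "\<lambda>x. cylinder (n x) x"])
    show "UNIV \<subseteq> (\<Union>x. cylinder (n x) x)"
      by (auto simp: cylinder_def)
  qed (auto simp: open_cylinder)
  have "depends_on_digits (Max (n ` C)) f"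
  proof (rule depends_on_digitsI)
    fix y z :: Z2
    assume yz: "\<And>i. i < Max (n ` C) \<Longrightarrow> y i = z i"
    obtain x where "x \<in> C" and y: "y \<in> cylinder (n x) x"
      using cover by blast
    then have "n x \<le> Max (n ` C)"
      using \<open>finite C\<close> by simp
    then have "z \<in> cylinder (n x) x"
      using y yz by (auto simp: cylinder_def)
    then show "f y = f z"
      using n[OF y] n[of z x] by simp
  qed
  then show thesis ..
qed

lemma mem_cylinder_nat_digits_iff:
  "j < 2 ^ M \<Longrightarrow> x \<in> cylinder M (nat_digits j) \<longleftrightarrow> trunc2 M x = j"
  by (simp add: mem_cylinder_iff_trunc2 trunc2_nat_digits)

lemma depends_on_digits_eq_sum:
  fixes g :: "Z2 \<Rightarrow> 'a::real_vector"
  assumes "depends_on_digits M g"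
  shows "g = (\<lambda>x. \<Sum>j<2^M. indicator (cylinder M (nat_digits j)) x *\<^sub>R g (nat_digits j))"
proof
  fix x
  have "(\<Sum>j<2^M. indicator (cylinder M (nat_digits j)) x *\<^sub>R g (nat_digits j))
      = (\<Sum>j<2^M. if j = trunc2 M x then g (nat_digits j) else 0)"
    by (intro sum.cong refl) (simp add: mem_cylinder_nat_digits_iff indicator_def)
  also have "\<dots> = g (nat_digits (trunc2 M x))"
    using trunc2_less[of M x] by simp
  also have "\<dots> = g x"
    using depends_on_digitsD[OF assms, of M "nat_digits (trunc2 M x)" x]
    by (simp add: nat_digits_trunc2)
  finally show "g x = (\<Sum>j<2^M. indicator (cylinder M (nat_digits j)) x *\<^sub>R g (nat_digits j))" ..
qed

lemma integrable_depends_on_digits: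
  fixes g :: "Z2 \<Rightarrow> 'a::{banach,second_countable_topology}"
  assumes "depends_on_digits M g"
  shows "integrable haar2 g"
  by (subst depends_on_digits_eq_sum[OF assms])
    (intro Bochner_Integration.integrable_sum integrable_scaleR_left integrable_indicator_cylinder)

lemma integral_depends_on_digits:
  fixes g :: "Z2 \<Rightarrow> 'a::{banach,second_countable_topology}"
  assumes "depends_on_digits M g"
  shows "integral\<^sup>L haar2 g = (\<Sum>j<2^M. (1/2)^M *\<^sub>R g (nat_digits j))"
proof -
  have "integral\<^sup>L haar2 g = (\<Sum>j<2^M. LINT x|haar2. indicator (cylinder M (nat_digits j)) x *\<^sub>R g (nat_digits j))"
    by (subst depends_on_digits_eq_sum[OF assms], rule Bochner_Integration.integral_sum)
      (intro integrable_scaleR_left integrable_indicator_cylinder)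
  then show ?thesis
    by (simp only: integral_indicator_cylinder_scaleR)
qed

definition depends_on_digits2 :: "nat \<Rightarrow> (Z2 \<Rightarrow> Z2 \<Rightarrow> 'a) \<Rightarrow> bool" where
  "depends_on_digits2 M \<Phi> \<longleftrightarrow> (\<forall>x. depends_on_digits M (\<Phi> x)) \<and> (\<forall>y. depends_on_digits M (\<lambda>x. \<Phi> x y))"

(* Phrased through truncation so that concrete integrands can be handled by simp. *)

lemma depends_on_digits2I:
  assumes "\<And>x y. \<Phi> (nat_digits (trunc2 M x)) (nat_digits (trunc2 M y)) = \<Phi> x y"
  shows "depends_on_digits2 M \<Phi>"
  unfolding depends_on_digits2_def
proof (intro allI conjI depends_on_digitsI)
  fix x y z :: Z2
  assume "\<And>i. i < M \<Longrightarrow> y i = z i"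
  then have "trunc2 M y = trunc2 M z"
    by (rule trunc2_cong)
  then show "\<Phi> x y = \<Phi> x z" and "\<Phi> y x = \<Phi> z x"
    by (metis assms)+
qed

lemma depends_on_digits2_comp2:
  "depends_on_digits2 M \<Phi> \<Longrightarrow> depends_on_digits2 M \<Psi> \<Longrightarrow> depends_on_digits2 M (\<lambda>x y. F (\<Phi> x y) (\<Psi> x y))"
  unfolding depends_on_digits2_def by (auto intro: depends_on_digits_comp2)

context
  fixes M :: nat and \<Phi> :: "Z2 \<Rightarrow> Z2 \<Rightarrow> 'a::{banach,second_countable_topology}"
  assumes dep: "depends_on_digits2 M \<Phi>"
begin

lemma integrable_depends_on_digits2: "integrable haar2 (\<Phi> x)"
  using dep by (auto simp: depends_on_digits2_def intro: integrable_depends_on_digits)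

lemma depends_on_digits_inner_integral: "depends_on_digits M (\<lambda>x. LINT y|haar2. \<Phi> x y)"
  using dep unfolding depends_on_digits2_def depends_on_digits_def
  by (auto intro!: Bochner_Integration.integral_cong)

lemma integrable_inner_integral: "integrable haar2 (\<lambda>x. LINT y|haar2. \<Phi> x y)"
  by (rule integrable_depends_on_digits[OF depends_on_digits_inner_integral])

lemma double_integral_eq_sum:
  "(LINT x|haar2. LINT y|haar2. \<Phi> x y)
    = (\<Sum>i<2^M. \<Sum>j<2^M. ((1/2) ^ M * (1/2) ^ M) *\<^sub>R \<Phi> (nat_digits i) (nat_digits j))"
proof -
  have inner: "depends_on_digits M (\<Phi> x)" for x
    using dep by (simp add: depends_on_digits2_def)
  have "(LINT x|haar2. LINT y|haar2. \<Phi> x y) = (\<Sum>i<2^M. (1/2) ^ M *\<^sub>R (LINT y|haar2. \<Phi> (nat_digits i) y))"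
    by (rule integral_depends_on_digits[OF depends_on_digits_inner_integral])
  then show ?thesis
    by (simp only: integral_depends_on_digits[OF inner] scaleR_sum_right scaleR_scaleR)
qed

end

lemma double_integral_swap:
  fixes \<Phi> :: "Z2 \<Rightarrow> Z2 \<Rightarrow> 'a::{banach,second_countable_topology}"
  assumes "depends_on_digits2 M \<Phi>"
  shows "(LINT x|haar2. LINT y|haar2. \<Phi> x y) = (LINT y|haar2. LINT x|haar2. \<Phi> x y)"
proof -
  have swapped: "depends_on_digits2 M (\<lambda>y x. \<Phi> x y)"
    using assms by (simp add: depends_on_digits2_def)
  show ?thesis
    by (simp only: double_integral_eq_sum[OF assms] double_integral_eq_sum[OF swapped])
      (rule sum.swap)
qed

lemma double_integral_add:
  fixes \<Phi> \<Psi> :: "Z2 \<Rightarrow> Z2 \<Rightarrow> 'a::{banach,second_countable_topology}"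
  assumes "depends_on_digits2 M \<Phi>" "depends_on_digits2 M \<Psi>"
  shows "(LINT x|haar2. LINT y|haar2. \<Phi> x y + \<Psi> x y)
    = (LINT x|haar2. LINT y|haar2. \<Phi> x y) + (LINT x|haar2. LINT y|haar2. \<Psi> x y)"
  using assms
  by (simp add: integrable_depends_on_digits2 integrable_inner_integral)

lemma double_integral_diff:
  fixes \<Phi> \<Psi> :: "Z2 \<Rightarrow> Z2 \<Rightarrow> 'a::{banach,second_countable_topology}"
  assumes "depends_on_digits2 M \<Phi>" "depends_on_digits2 M \<Psi>"
  shows "(LINT x|haar2. LINT y|haar2. \<Phi> x y - \<Psi> x y)
    = (LINT x|haar2. LINT y|haar2. \<Phi> x y) - (LINT x|haar2. LINT y|haar2. \<Psi> x y)"
  using assms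
  by (simp add: Bochner_Integration.integral_diff integrable_depends_on_digits2 integrable_inner_integral)

lemma double_integral_sum:
  fixes \<Phi> :: "'i \<Rightarrow> Z2 \<Rightarrow> Z2 \<Rightarrow> 'a::{banach,second_countable_topology}"
  assumes "\<And>k. k \<in> K \<Longrightarrow> depends_on_digits2 M (\<Phi> k)"
  shows "(LINT x|haar2. LINT y|haar2. (\<Sum>k\<in>K. \<Phi> k x y)) = (\<Sum>k\<in>K. LINT x|haar2. LINT y|haar2. \<Phi> k x y)"
proof -
  have "(LINT x|haar2. LINT y|haar2. (\<Sum>k\<in>K. \<Phi> k x y)) = (LINT x|haar2. (\<Sum>k\<in>K. LINT y|haar2. \<Phi> k x y))"
    by (intro Bochner_Integration.integral_cong refl Bochner_Integration.integral_sum)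
      (rule integrable_depends_on_digits2[OF assms])
  also have "\<dots> = (\<Sum>k\<in>K. LINT x|haar2. LINT y|haar2. \<Phi> k x y)"
    by (rule Bochner_Integration.integral_sum, rule integrable_inner_integral, rule assms)
  finally show ?thesis .
qed

lemma double_integral_Re:
  fixes \<Phi> :: "Z2 \<Rightarrow> Z2 \<Rightarrow> complex"
  assumes "depends_on_digits2 M \<Phi>"
  shows "(LINT x|haar2. LINT y|haar2. Re (\<Phi> x y)) = Re (LINT x|haar2. LINT y|haar2. \<Phi> x y)"
  using assms by (simp add: integrable_depends_on_digits2 integrable_inner_integral)

section \<open>Characters and level energies\<close>

definition char2 :: "nat \<Rightarrow> nat \<Rightarrow> Z2 \<Rightarrow> complex" where
  "char2 n a x = exp (- 2 * pi * \<i> * of_real (real a * real (trunc2 n x) / 2 ^ n))"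

lemma fourier2_char2: "fourier2 f (n, a) = (LINT x|haar2. char2 n a x * f x)"
  by (simp add: fourier2_def char2_def)

lemma exp_2pi_int: "exp (2 * pi * \<i> * of_int m) = 1"
  using exp_integer_2pi[of "of_int m"] by (simp add: mult_ac)

lemma char2_double: "char2 (Suc n) (2 * b) x = char2 n b x"
proof -
  define c :: nat where "c = (if x n then 1 else 0)"
  have "real (2 * b) * real (trunc2 (Suc n) x) / 2 ^ Suc n
      = real b * real (trunc2 n x) / 2 ^ n + real (b * c)"
    by (simp add: trunc2_Suc c_def field_simps)
  then have "char2 (Suc n) (2 * b) x
      = exp (- 2 * pi * \<i> * of_real (real b * real (trunc2 n x) / 2 ^ n)
          + 2 * pi * \<i> * of_int (- int (b * c)))"
    unfolding char2_def by (simp add: algebra_simps)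
  also have "\<dots> = char2 n b x"
    unfolding exp_add exp_2pi_int char2_def by simp
  finally show ?thesis .
qed

lemma fourier2_double: "fourier2 f (Suc n, 2 * b) = fourier2 f (n, b)"
  by (simp add: fourier2_char2 char2_double)

lemma sum_roots_of_unity:
  fixes d :: int
  assumes "\<bar>d\<bar> < 2 ^ n"
  shows "(\<Sum>a<(2::nat)^n. exp (2 * pi * \<i> * of_real (real a * real_of_int d / 2 ^ n)))
    = (if d = 0 then 2 ^ n else 0)"
proof (cases "d = 0")
  case True
  then show ?thesis by simp
next
  case False
  define z where "z = exp (2 * pi * \<i> * of_real (real_of_int d / 2 ^ n))"
  have powers: "exp (2 * pi * \<i> * of_real (real a * real_of_int d / 2 ^ n)) = z ^ a" for a :: nat
    unfolding z_def exp_of_nat_mult[symmetric] by (simp add: algebra_simps)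
  have "z ^ (2 ^ n) = 1"
    unfolding z_def exp_of_nat_mult[symmetric] using exp_2pi_int[of d] by (simp add: algebra_simps)
  moreover have "z \<noteq> 1"
  proof
    assume "z = 1"
    then obtain m :: int where "2 * pi * (real_of_int d / 2 ^ n) = of_int (2 * m) * pi"
      unfolding z_def exp_eq_1 by auto
    then have "real_of_int d = of_int m * 2 ^ n"
      by (simp add: field_simps)
    then have "d = m * 2 ^ n"
      by (metis of_int_eq_iff of_int_mult of_int_numeral of_int_power)
    with False assms show False
      by (auto simp: abs_mult mult_le_cancel_right1)
  qed
  ultimately have "(\<Sum>a<(2::nat)^n. z ^ a) = 0"
    by (simp add: sum_gp_strict)
  then show ?thesis
    using False by (simp only: powers) simp
qed

lemma char2_orthogonality:
  "(\<Sum>a<(2::nat)^n. char2 n a x * cnj (char2 n a y)) = (if trunc2 n x = trunc2 n y then 2 ^ n else 0)"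
proof -
  define d where "d = int (trunc2 n y) - int (trunc2 n x)"
  have "int (trunc2 n x) < 2 ^ n" "int (trunc2 n y) < 2 ^ n"
    using trunc2_less by (metis of_nat_less_iff of_nat_numeral of_nat_power)+
  then have "\<bar>d\<bar> < 2 ^ n"
    unfolding d_def by linarith
  have diff: "real (trunc2 n y) - real (trunc2 n x) = real_of_int d"
    by (simp add: d_def)
  have "char2 n a x * cnj (char2 n a y)
      = exp (2 * pi * \<i> * of_real (real a * real_of_int d / 2 ^ n))" for a
  proof -
    have "char2 n a x * cnj (char2 n a y)
        = exp (2 * pi * \<i> * of_real (real a * (real (trunc2 n y) - real (trunc2 n x)) / 2 ^ n))"
      unfolding char2_def exp_cnj by (simp add: exp_add[symmetric] algebra_simps diff_divide_distrib)
    then show ?thesis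
      by (simp only: diff)
  qed
  then have "(\<Sum>a<(2::nat)^n. char2 n a x * cnj (char2 n a y))
      = (\<Sum>a<(2::nat)^n. exp (2 * pi * \<i> * of_real (real a * real_of_int d / 2 ^ n)))"
    by simp
  also have "\<dots> = (if d = 0 then 2 ^ n else 0)"
    by (rule sum_roots_of_unity) fact
  finally show ?thesis
    by (simp add: d_def)
qed

definition odd_numerators :: "nat \<Rightarrow> nat set" where
  "odd_numerators n = (if n = 0 then {0} else {a. odd a \<and> a < 2 ^ n})"

lemma finite_odd_numerators [simp]: "finite (odd_numerators n)"
  by (simp add: odd_numerators_def)

lemma Lambda2_eq_Sigma: "Lambda2 = Sigma UNIV odd_numerators"
  by (auto simp: Lambda2_def odd_numerators_def split: if_splits)

definition level_energy :: "(Z2 \<Rightarrow> complex) \<Rightarrow> nat \<Rightarrow> real" where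
  "level_energy f n = (\<Sum>a\<in>odd_numerators n. (cmod (fourier2 f (n, a)))\<^sup>2)"

lemma level_energy_nonneg: "level_energy f n \<ge> 0"
  unfolding level_energy_def by (intro sum_nonneg) simp

lemma sum_fourier2_level:
  "(\<Sum>a<(2::nat)^n. (cmod (fourier2 f (n, a)))\<^sup>2) = (\<Sum>m\<le>n. level_energy f m)"
proof (induction n)
  case 0
  show ?case by (simp add: level_energy_def odd_numerators_def lessThan_def)
next
  case (Suc n)
  have split: "{..<(2::nat)^Suc n} = odd_numerators (Suc n) \<union> (\<lambda>b. 2 * b) ` {..<2^n}"
    by (auto simp: odd_numerators_def elim!: evenE)
  have disjoint: "odd_numerators (Suc n) \<inter> (\<lambda>b. 2 * b) ` {..<(2::nat)^n} = {}"
    by (auto simp: odd_numerators_def)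
  have "(\<Sum>a<(2::nat)^Suc n. (cmod (fourier2 f (Suc n, a)))\<^sup>2)
      = level_energy f (Suc n) + (\<Sum>a\<in>(\<lambda>b. 2 * b) ` {..<(2::nat)^n}. (cmod (fourier2 f (Suc n, a)))\<^sup>2)"
    unfolding split level_energy_def by (rule sum.union_disjoint) (use disjoint in auto)
  also have "(\<Sum>a\<in>(\<lambda>b. 2 * b) ` {..<(2::nat)^n}. (cmod (fourier2 f (Suc n, a)))\<^sup>2)
      = (\<Sum>b<(2::nat)^n. (cmod (fourier2 f (n, b)))\<^sup>2)"
    by (subst sum.reindex) (auto simp: inj_on_def fourier2_double)
  finally show ?case
    using Suc.IH by simp
qed

section \<open>Comparing weighted sums of level energies\<close>

lemma sum_tails_swap:
  fixes a P :: "nat \<Rightarrow> 'a::comm_semiring_1"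
  shows "(\<Sum>k<N. a k * (\<Sum>m\<in>{k<..N}. P m)) = (\<Sum>m\<le>N. P m * (\<Sum>k<m. a k))"
proof (induction N)
  case 0
  then show ?case by simp
next
  case (Suc N)
  have "k < Suc N \<Longrightarrow> {k<..Suc N} = insert (Suc N) {k<..N}" for k
    by auto
  then have "(\<Sum>k<Suc N. a k * (\<Sum>m\<in>{k<..Suc N}. P m))
      = (\<Sum>k<Suc N. a k * P (Suc N) + a k * (\<Sum>m\<in>{k<..N}. P m))"
    by (intro sum.cong refl) (simp add: distrib_left)
  also have "\<dots> = (\<Sum>k<Suc N. a k) * P (Suc N) + (\<Sum>k<N. a k * (\<Sum>m\<in>{k<..N}. P m))"
    by (simp add: sum.distrib sum_distrib_right distrib_right)
  finally show ?case
    using Suc.IH by (simp add: mult.commute add.commute)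
qed

lemma sum_shift_Suc:
  fixes a P :: "nat \<Rightarrow> 'a::comm_semiring_1"
  shows "(\<Sum>k<N. a k * P (Suc k)) = (\<Sum>m\<le>N. (if m = 0 then 0 else a (m - 1)) * P m)"
  by (simp add: sum.atMost_shift)

lemma two_powr_scale:
  fixes s :: real
  shows "2 powr ((1 + 2 * s) * k) * (1/2) ^ k = (2 powr (2 * s)) ^ k"
proof -
  have "2 powr ((1 + 2 * s) * k) = 2 powr real k * 2 powr (real k * (2 * s))"
    by (simp add: powr_add[symmetric] algebra_simps)
  also have "\<dots> = 2 ^ k * (2 powr (2 * s)) ^ k"
    by (simp add: powr_realpow powr_power)
  finally show ?thesis
    by (simp add: power_one_over)
qed

definition gagliardo_weight :: "real \<Rightarrow> nat \<Rightarrow> real" where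
  "gagliardo_weight q m = (\<Sum>k<m. q ^ k) + (if m = 0 then 0 else q ^ (m - 1))"

lemma gagliardo_weight_nonneg: "q \<ge> 0 \<Longrightarrow> gagliardo_weight q m \<ge> 0"
  by (simp add: gagliardo_weight_def sum_nonneg)

lemma gagliardo_weight_le:
  assumes "q > 1"
  shows "1 + gagliardo_weight q m \<le> (2 + 1 / (q - 1)) * q ^ m"
proof -
  have "(\<Sum>k<m. q ^ k) = (q ^ m - 1) / (q - 1)"
    using assms by (simp add: geometric_sum)
  also have "\<dots> \<le> q ^ m / (q - 1)"
    using assms by (simp add: divide_right_mono)
  finally have geometric: "(\<Sum>k<m. q ^ k) \<le> q ^ m / (q - 1)" .
  have "(if m = 0 then 0 else q ^ (m - 1)) \<le> q ^ m"
    using assms by (auto intro: power_increasing)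
  moreover have "1 \<le> q ^ m"
    using assms by simp
  ultimately show ?thesis
    using geometric by (simp add: gagliardo_weight_def algebra_simps)
qed

lemma le_gagliardo_weight:
  assumes "q > 1"
  shows "q ^ Suc m \<le> q\<^sup>2 * (1 + gagliardo_weight q m)"
proof (cases m)
  case 0
  then show ?thesis
    using assms by (simp add: gagliardo_weight_def power2_eq_square)
next
  case (Suc k)
  have "q ^ Suc m = q\<^sup>2 * q ^ k"
    by (simp add: Suc power2_eq_square)
  also have "\<dots> \<le> q\<^sup>2 * (1 + gagliardo_weight q m)"
    using assms by (intro mult_left_mono) (simp_all add: Suc gagliardo_weight_def sum_nonneg)
  finally show ?thesis .
qed

lemma gagliardo_weight_comparable:
  fixes s :: real and n :: nat
  assumes "s > 0"
  defines "q \<equiv> 2 powr (2 * s)"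
  shows "1 + gagliardo_weight q n \<le> (2 + 1 / (q - 1)) * (1 + (if n = 0 then 0 else 2 ^ n)) powr (2 * s)"
    and "(1 + (if n = 0 then 0 else 2 ^ n)) powr (2 * s) \<le> q\<^sup>2 * (1 + gagliardo_weight q n)"
proof -
  have "q > 1"
    unfolding q_def using assms by (intro gr_one_powr) auto
  have power: "q ^ k = (2 ^ k) powr (2 * s)" for k
    unfolding q_def by (simp add: powr_power powr_powr powr_realpow[symmetric] mult.commute)
  have "q ^ n \<le> (1 + (if n = 0 then 0 else 2 ^ n)) powr (2 * s)"
    unfolding power using assms by (auto intro: powr_mono2)
  with \<open>q > 1\<close> have "(2 + 1 / (q - 1)) * q ^ n \<le> (2 + 1 / (q - 1)) * (1 + (if n = 0 then 0 else 2 ^ n)) powr (2 * s)"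
    by (intro mult_left_mono) auto
  then show "1 + gagliardo_weight q n \<le> (2 + 1 / (q - 1)) * (1 + (if n = 0 then 0 else 2 ^ n)) powr (2 * s)"
    using gagliardo_weight_le[OF \<open>q > 1\<close>, of n] by linarith
  have "1 + (if n = 0 then 0 else 2 ^ n) \<le> (2::real) ^ Suc n"
    by simp
  then have "(1 + (if n = 0 then 0 else 2 ^ n)) powr (2 * s) \<le> q ^ Suc n"
    unfolding power using assms by (intro powr_mono2) auto
  then show "(1 + (if n = 0 then 0 else 2 ^ n)) powr (2 * s) \<le> q\<^sup>2 * (1 + gagliardo_weight q n)"
    using le_gagliardo_weight[OF \<open>q > 1\<close>, of n] by linarith
qed

lemma sqrt_add_le_sqrt_double: "0 \<le> a \<Longrightarrow> 0 \<le> b \<Longrightarrow> sqrt a + sqrt b \<le> sqrt (2 * (a + b))"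
proof (rule real_le_rsqrt)
  assume "0 \<le> a" "0 \<le> b"
  moreover have "0 \<le> (sqrt a - sqrt b)\<^sup>2"
    by simp
  ultimately show "(sqrt a + sqrt b)\<^sup>2 \<le> 2 * (a + b)"
    by (simp add: power2_eq_square algebra_simps)
qed

lemma sqrt_weighted_sums_comparable:
  fixes A :: "'i set" and P u w :: "'i \<Rightarrow> real"
  assumes P: "\<And>m. 0 \<le> P m" and u: "\<And>m. 0 \<le> u m"
    and le_w: "\<And>m. 1 + u m \<le> K1 * w m" and w_le: "\<And>m. w m \<le> K2 * (1 + u m)"
    and "0 < K1" "0 \<le> K2"
  defines "L \<equiv> \<Sum>m\<in>A. P m" and "G \<equiv> \<Sum>m\<in>A. u m * P m" and "H \<equiv> \<Sum>m\<in>A. w m * P m"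
  shows "1 / sqrt (2 * K1) * (sqrt L + sqrt G) \<le> sqrt H" and "sqrt H \<le> sqrt K2 * (sqrt L + sqrt G)"
proof -
  have L: "0 \<le> L" and G: "0 \<le> G"
    unfolding L_def G_def using P u by (auto intro: sum_nonneg)
  have LG: "L + G = (\<Sum>m\<in>A. (1 + u m) * P m)"
    unfolding L_def G_def by (simp add: sum.distrib algebra_simps)
  have "L + G \<le> K1 * H"
    unfolding LG H_def sum_distrib_left
    by (intro sum_mono) (use P le_w in \<open>simp add: mult_right_mono flip: mult.assoc\<close>)
  then have "sqrt L + sqrt G \<le> sqrt (2 * (K1 * H))"
    using sqrt_add_le_sqrt_double[OF L G] by (smt (verit) real_sqrt_le_iff)
  then have "sqrt L + sqrt G \<le> sqrt (2 * K1) * sqrt H"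
    by (simp add: real_sqrt_mult mult.assoc)
  then show "1 / sqrt (2 * K1) * (sqrt L + sqrt G) \<le> sqrt H"
    using \<open>0 < K1\<close> by (simp add: field_simps)
  have "H \<le> K2 * (L + G)"
    unfolding LG H_def sum_distrib_left
    by (intro sum_mono) (use P w_le in \<open>simp add: mult_right_mono flip: mult.assoc\<close>)
  then have "sqrt H \<le> sqrt K2 * sqrt (L + G)"
    by (simp add: real_sqrt_mult[symmetric])
  also have "\<dots> \<le> sqrt K2 * (sqrt L + sqrt G)"
    using L G \<open>0 \<le> K2\<close> by (intro mult_left_mono sqrt_add_le_add_sqrt) auto
  finally show "sqrt H \<le> sqrt K2 * (sqrt L + sqrt G)" .
qed

section \<open>Level energies of a function depending on finitely many digits\<close>

lemma cmod_diff_power2: "(cmod (a - b))\<^sup>2 = (cmod a)\<^sup>2 + (cmod b)\<^sup>2 - 2 * Re (a * cnj b)"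
  unfolding cmod_power2 by (simp add: power2_eq_square algebra_simps)

definition cylinder_oscillation :: "(Z2 \<Rightarrow> complex) \<Rightarrow> nat \<Rightarrow> Z2 \<Rightarrow> Z2 \<Rightarrow> real" where
  "cylinder_oscillation f k x y = indicator (cylinder k x) y * (cmod (f x - f y))\<^sup>2"

context
  fixes f :: "Z2 \<Rightarrow> complex" and N :: nat
  assumes depf: "depends_on_digits N f"
begin

lemma depends_on_digits2_cylinder:
  fixes F :: "complex \<Rightarrow> complex \<Rightarrow> 'a::{zero_neq_one,mult_zero}"
  assumes "k \<le> M" "N \<le> M"
  shows "depends_on_digits2 M (\<lambda>x y. indicator (cylinder k x) y * F (f x) (f y))"
  by (rule depends_on_digits2I)
    (simp add: assms mem_cylinder_iff_trunc2 trunc2_nat_digits_trunc2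
      depends_on_digits_nat_digits_trunc2[OF depf] indicator_def)

lemma sum_fourier2_level_eq_correlation:
  "of_real (\<Sum>a<(2::nat)^n. (cmod (fourier2 f (n, a)))\<^sup>2)
    = 2 ^ n * (LINT x|haar2. LINT y|haar2. indicator (cylinder n x) y * (f x * cnj (f y)))"
proof -
  define M where "M = max n N"
  define g where "g a x y = (char2 n a x * f x) * (cnj (char2 n a y) * cnj (f y))" for a x y
  have dep: "depends_on_digits2 M (g a)" for a
    by (rule depends_on_digits2I)
      (simp add: g_def M_def char2_def trunc2_nat_digits_trunc2 depends_on_digits_nat_digits_trunc2[OF depf])
  have square: "of_real ((cmod (fourier2 f (n, a)))\<^sup>2) = (LINT x|haar2. LINT y|haar2. g a x y)" for a
  proof -
    have "of_real ((cmod (fourier2 f (n, a)))\<^sup>2) = fourier2 f (n, a) * cnj (fourier2 f (n, a))"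
      by (rule complex_norm_square)
    also have "\<dots> = (LINT x|haar2. char2 n a x * f x) * (LINT y|haar2. cnj (char2 n a y * f y))"
      by (simp only: fourier2_char2 Bochner_Integration.integral_cnj)
    finally show ?thesis
      by (simp add: g_def)
  qed
  have orthogonality: "(\<Sum>a<(2::nat)^n. g a x y) = 2 ^ n * (indicator (cylinder n x) y * (f x * cnj (f y)))" for x y
  proof -
    have "(\<Sum>a<(2::nat)^n. g a x y) = (\<Sum>a<(2::nat)^n. char2 n a x * cnj (char2 n a y)) * (f x * cnj (f y))"
      unfolding g_def sum_distrib_right by (intro sum.cong refl) (simp add: mult_ac)
    also have "\<dots> = 2 ^ n * (indicator (cylinder n x) y * (f x * cnj (f y)))"
      unfolding char2_orthogonality by (simp add: mem_cylinder_iff_trunc2 indicator_def)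
    finally show ?thesis .
  qed
  have "of_real (\<Sum>a<(2::nat)^n. (cmod (fourier2 f (n, a)))\<^sup>2) = (\<Sum>a<(2::nat)^n. LINT x|haar2. LINT y|haar2. g a x y)"
    by (simp only: of_real_sum square)
  also have "\<dots> = (LINT x|haar2. LINT y|haar2. (\<Sum>a<(2::nat)^n. g a x y))"
    by (rule double_integral_sum[symmetric]) (rule dep)
  also have "\<dots> = 2 ^ n * (LINT x|haar2. LINT y|haar2. indicator (cylinder n x) y * (f x * cnj (f y)))"
    by (simp only: orthogonality integral_mult_right_zero)
  finally show ?thesis .
qed

lemma sum_fourier2_top_level:
  assumes "N \<le> n"
  shows "(\<Sum>a<(2::nat)^n. (cmod (fourier2 f (n, a)))\<^sup>2) = (LINT x|haar2. (cmod (f x))\<^sup>2)"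
proof -
  have "indicator (cylinder n x) y * (f x * cnj (f y)) = indicator (cylinder n x) y * of_real ((cmod (f x))\<^sup>2)"
    for x y
  proof (cases "y \<in> cylinder n x")
    case True
    then have "f y = f x"
      using depends_on_digitsD[OF depf, of n y x] assms by (simp add: cylinder_def)
    then show ?thesis
      by (simp only: complex_norm_square)
  qed simp
  then have "(of_real (\<Sum>a<(2::nat)^n. (cmod (fourier2 f (n, a)))\<^sup>2) :: complex)
      = 2 ^ n * (LINT x|haar2. (1/2) ^ n * of_real ((cmod (f x))\<^sup>2))"
    by (simp only: sum_fourier2_level_eq_correlation integral_indicator_cylinder_times)
  also have "\<dots> = of_real (LINT x|haar2. (cmod (f x))\<^sup>2)"
    by (simp add: power_one_over del: of_real_power)
  finally show ?thesis
    by (simp only: of_real_eq_iff)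
qed

lemma double_integral_cylinder_norm_square:
  "(LINT x|haar2. LINT y|haar2. indicator (cylinder k x) y * (cmod (f x))\<^sup>2)
    = (1/2) ^ k * (LINT x|haar2. (cmod (f x))\<^sup>2)"
  "(LINT x|haar2. LINT y|haar2. indicator (cylinder k x) y * (cmod (f y))\<^sup>2)
    = (1/2) ^ k * (LINT x|haar2. (cmod (f x))\<^sup>2)"
proof -
  show "(LINT x|haar2. LINT y|haar2. indicator (cylinder k x) y * (cmod (f x))\<^sup>2)
      = (1/2) ^ k * (LINT x|haar2. (cmod (f x))\<^sup>2)"
    by (simp only: integral_indicator_cylinder_times integral_mult_right_zero)
  have "(LINT x|haar2. LINT y|haar2. indicator (cylinder k x) y * (cmod (f y))\<^sup>2)
      = (LINT y|haar2. LINT x|haar2. indicator (cylinder k y) x * (cmod (f y))\<^sup>2)"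
    by (subst double_integral_swap[OF depends_on_digits2_cylinder[of k "max k N"]])
      (simp_all add: mem_cylinder_commute indicator_def)
  then show "(LINT x|haar2. LINT y|haar2. indicator (cylinder k x) y * (cmod (f y))\<^sup>2)
      = (1/2) ^ k * (LINT x|haar2. (cmod (f x))\<^sup>2)"
    by (simp only: integral_indicator_cylinder_times integral_mult_right_zero)
qed

lemma double_integral_cylinder_Re_correlation:
  "(LINT x|haar2. LINT y|haar2. indicator (cylinder k x) y * Re (2 * (f x * cnj (f y))))
    = 2 * (1/2) ^ k * (\<Sum>a<(2::nat)^k. (cmod (fourier2 f (k, a)))\<^sup>2)"
proof -
  define C where "C = (LINT x|haar2. LINT y|haar2. indicator (cylinder k x) y * (f x * cnj (f y)))"
  have "indicator (cylinder k x) y * Re (2 * (f x * cnj (f y)))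
      = Re (indicator (cylinder k x) y * (2 * (f x * cnj (f y))))" for x y
    by (simp add: indicator_def)
  then have "(LINT x|haar2. LINT y|haar2. indicator (cylinder k x) y * Re (2 * (f x * cnj (f y))))
      = Re (LINT x|haar2. LINT y|haar2. indicator (cylinder k x) y * (2 * (f x * cnj (f y))))"
    by (simp only: double_integral_Re[OF depends_on_digits2_cylinder[of k "max k N" "\<lambda>u v. 2 * (u * cnj v)"]]
        max.cobounded1 max.cobounded2)
  also have "\<dots> = Re (2 * C)"
    unfolding C_def by (simp only: mult.left_commute[of "indicator _ _" 2] integral_mult_right_zero)
  also have "C = of_real ((1/2) ^ k * (\<Sum>a<(2::nat)^k. (cmod (fourier2 f (k, a)))\<^sup>2))"
    using sum_fourier2_level_eq_correlation[of k] unfolding C_def[symmetric]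
    by (simp add: power_one_over)
  finally show ?thesis
    by simp
qed

lemma oscillation_integral:
  "(LINT x|haar2. LINT y|haar2. cylinder_oscillation f k x y)
    = 2 * (1/2) ^ k * ((LINT x|haar2. (cmod (f x))\<^sup>2) - (\<Sum>a<(2::nat)^k. (cmod (fourier2 f (k, a)))\<^sup>2))"
proof -
  define M where "M = max k N"
  have kM: "k \<le> M" and NM: "N \<le> M"
    by (simp_all add: M_def)
  have dep_x: "depends_on_digits2 M (\<lambda>x y. indicator (cylinder k x) y * (cmod (f x))\<^sup>2)"
    using depends_on_digits2_cylinder[OF kM NM, of "\<lambda>u v. (cmod u)\<^sup>2"] by simp
  have dep_y: "depends_on_digits2 M (\<lambda>x y. indicator (cylinder k x) y * (cmod (f y))\<^sup>2)"
    using depends_on_digits2_cylinder[OF kM NM, of "\<lambda>u v. (cmod v)\<^sup>2"] by simp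
  have dep_Re: "depends_on_digits2 M (\<lambda>x y. indicator (cylinder k x) y * Re (2 * (f x * cnj (f y))))"
    using depends_on_digits2_cylinder[OF kM NM, of "\<lambda>u v. Re (2 * (u * cnj v))"] by simp
  have "cylinder_oscillation f k x y = indicator (cylinder k x) y * (cmod (f x))\<^sup>2
      + indicator (cylinder k x) y * (cmod (f y))\<^sup>2 - indicator (cylinder k x) y * Re (2 * (f x * cnj (f y)))"
    for x y
    by (simp add: cylinder_oscillation_def cmod_diff_power2 algebra_simps)
  then have "(LINT x|haar2. LINT y|haar2. cylinder_oscillation f k x y)
      = (LINT x|haar2. LINT y|haar2. indicator (cylinder k x) y * (cmod (f x))\<^sup>2)
      + (LINT x|haar2. LINT y|haar2. indicator (cylinder k x) y * (cmod (f y))\<^sup>2)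
      - (LINT x|haar2. LINT y|haar2. indicator (cylinder k x) y * Re (2 * (f x * cnj (f y))))"
    by (simp only: double_integral_diff[OF depends_on_digits2_comp2[OF dep_x dep_y] dep_Re]
        double_integral_add[OF dep_x dep_y])
  also have "\<dots> = 2 * (1/2) ^ k * ((LINT x|haar2. (cmod (f x))\<^sup>2) - (\<Sum>a<(2::nat)^k. (cmod (fourier2 f (k, a)))\<^sup>2))"
    unfolding double_integral_cylinder_norm_square double_integral_cylinder_Re_correlation
    by (simp only: right_diff_distrib mult_2 distrib_right)
  finally show ?thesis .
qed

lemma level_energy_top:
  assumes "N < n"
  shows "level_energy f n = 0"
proof -
  obtain m where n: "n = Suc m" and "N \<le> m"
    using assms by (cases n) auto
  then have "(\<Sum>j\<le>Suc m. level_energy f j) = (\<Sum>j\<le>m. level_energy f j)"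
    using sum_fourier2_top_level[of m] sum_fourier2_top_level[of "Suc m"]
    by (simp only: sum_fourier2_level le_SucI)
  then show ?thesis
    by (simp add: n)
qed

lemma fourier2_top:
  assumes "N < n" "a \<in> odd_numerators n"
  shows "fourier2 f (n, a) = 0"
  using level_energy_top[OF assms(1)] assms(2)
  by (simp add: level_energy_def sum_nonneg_eq_0_iff)

lemma L2_eq_sum_level_energy: "(LINT x|haar2. (cmod (f x))\<^sup>2) = (\<Sum>m\<le>N. level_energy f m)"
  using sum_fourier2_top_level[of N] by (simp add: sum_fourier2_level)

lemma oscillation_integral_level_energy:
  assumes "k \<le> N"
  shows "(LINT x|haar2. LINT y|haar2. cylinder_oscillation f k x y)
    = 2 * (1/2) ^ k * (\<Sum>m\<in>{k<..N}. level_energy f m)"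
proof -
  have "{..N} = {..k} \<union> {k<..N}" and "{..k} \<inter> {k<..N} = {}"
    using assms by auto
  then have "(\<Sum>m\<le>N. level_energy f m) = (\<Sum>m\<le>k. level_energy f m) + (\<Sum>m\<in>{k<..N}. level_energy f m)"
    by (simp add: sum.union_disjoint)
  then show ?thesis
    by (simp add: oscillation_integral L2_eq_sum_level_energy sum_fourier2_level)
qed

lemma gagliardo_integrand_telescope:
  fixes s :: real
  shows "(cmod (f x - f y))\<^sup>2 / abs2_diff x y powr (1 + 2 * s)
    = (\<Sum>k<N. 2 powr ((1 + 2 * s) * k) * (cylinder_oscillation f k x y - cylinder_oscillation f (Suc k) x y))"
proof (cases "x = y")
  case True
  then show ?thesis by (simp add: cylinder_oscillation_def)
next
  case False
  define v where "v = (LEAST i. x i \<noteq> y i)"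
  have mem: "y \<in> cylinder k x \<longleftrightarrow> k \<le> v" for k
    unfolding v_def by (rule mem_cylinder_iff_le_Least[OF False])
  show ?thesis
  proof (cases "v < N")
    case True
    have "abs2_diff x y powr (1 + 2 * s) = inverse (2 powr ((1 + 2 * s) * v))"
      unfolding v_def by (rule abs2_diff_powr[OF False])
    then have "(cmod (f x - f y))\<^sup>2 / abs2_diff x y powr (1 + 2 * s)
        = (\<Sum>k<N. if k = v then 2 powr ((1 + 2 * s) * v) * (cmod (f x - f y))\<^sup>2 else 0)"
      using True by (simp add: divide_inverse mult.commute)
    also have "\<dots> = (\<Sum>k<N. 2 powr ((1 + 2 * s) * k)
        * (cylinder_oscillation f k x y - cylinder_oscillation f (Suc k) x y))"
      by (intro sum.cong refl) (auto simp: cylinder_oscillation_def mem indicator_def)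
    finally show ?thesis .
  next
    case False
    then have "y \<in> cylinder N x"
      by (simp add: mem)
    then have "f x = f y"
      by (intro depends_on_digitsD[OF depf, of N]) (auto simp: cylinder_def)
    then show ?thesis
      by (simp add: cylinder_oscillation_def)
  qed
qed

lemma gagliardo_integral_telescope:
  fixes s :: real
  shows "(LINT x|haar2. LINT y|haar2. (cmod (f x - f y))\<^sup>2 / abs2_diff x y powr (1 + 2 * s))
    = (\<Sum>k<N. 2 powr ((1 + 2 * s) * k) *
        ((LINT x|haar2. LINT y|haar2. cylinder_oscillation f k x y)
          - (LINT x|haar2. LINT y|haar2. cylinder_oscillation f (Suc k) x y)))"
proof -
  have dep: "depends_on_digits2 N (cylinder_oscillation f k)" if "k \<le> N" for k
    using depends_on_digits2_cylinder[OF that order_refl, of "\<lambda>u v. (cmod (u - v))\<^sup>2"]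
    by (simp add: cylinder_oscillation_def[abs_def])
  have "(LINT x|haar2. LINT y|haar2. (cmod (f x - f y))\<^sup>2 / abs2_diff x y powr (1 + 2 * s))
      = (\<Sum>k<N. LINT x|haar2. LINT y|haar2. 2 powr ((1 + 2 * s) * k) *
          (cylinder_oscillation f k x y - cylinder_oscillation f (Suc k) x y))"
    unfolding gagliardo_integrand_telescope
    by (rule double_integral_sum, rule depends_on_digits2_comp2, (rule dep; simp)+)
  also have "\<dots> = (\<Sum>k<N. 2 powr ((1 + 2 * s) * k) *
        ((LINT x|haar2. LINT y|haar2. cylinder_oscillation f k x y)
          - (LINT x|haar2. LINT y|haar2. cylinder_oscillation f (Suc k) x y)))"
    by (intro sum.cong refl)
      (simp only: integral_mult_right_zero double_integral_diff[OF dep dep] lessThan_iff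
        less_imp_le Suc_leI)
  finally show ?thesis .
qed

lemma oscillation_increment_level_energy:
  fixes s :: real
  assumes "k < N"
  shows "2 powr ((1 + 2 * s) * k) *
      ((LINT x|haar2. LINT y|haar2. cylinder_oscillation f k x y)
        - (LINT x|haar2. LINT y|haar2. cylinder_oscillation f (Suc k) x y))
    = (2 powr (2 * s)) ^ k * ((\<Sum>m\<in>{k<..N}. level_energy f m) + level_energy f (Suc k))"
proof -
  have "{k<..N} = insert (Suc k) {Suc k<..N}"
    using assms by auto
  then have "(\<Sum>m\<in>{k<..N}. level_energy f m) = level_energy f (Suc k) + (\<Sum>m\<in>{Suc k<..N}. level_energy f m)"
    by simp
  with assms have "2 powr ((1 + 2 * s) * k) *
      ((LINT x|haar2. LINT y|haar2. cylinder_oscillation f k x y)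
        - (LINT x|haar2. LINT y|haar2. cylinder_oscillation f (Suc k) x y))
    = 2 powr ((1 + 2 * s) * k) * (1/2) ^ k * ((\<Sum>m\<in>{k<..N}. level_energy f m) + level_energy f (Suc k))"
    by (simp add: oscillation_integral_level_energy algebra_simps)
  then show ?thesis
    by (simp only: two_powr_scale)
qed

lemma gagliardo_integral_level_energy:
  fixes s :: real
  shows "(LINT x|haar2. LINT y|haar2. (cmod (f x - f y))\<^sup>2 / abs2_diff x y powr (1 + 2 * s))
    = (\<Sum>m\<le>N. gagliardo_weight (2 powr (2 * s)) m * level_energy f m)"
proof -
  let ?q = "2 powr (2 * s) :: real" and ?P = "level_energy f"
  have "(LINT x|haar2. LINT y|haar2. (cmod (f x - f y))\<^sup>2 / abs2_diff x y powr (1 + 2 * s))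
      = (\<Sum>k<N. ?q ^ k * ((\<Sum>m\<in>{k<..N}. ?P m) + ?P (Suc k)))"
    unfolding gagliardo_integral_telescope
    by (intro sum.cong refl) (simp add: oscillation_increment_level_energy)
  also have "\<dots> = (\<Sum>k<N. ?q ^ k * (\<Sum>m\<in>{k<..N}. ?P m)) + (\<Sum>k<N. ?q ^ k * ?P (Suc k))"
    by (simp add: distrib_left sum.distrib)
  also have "\<dots> = (\<Sum>m\<le>N. ?P m * (\<Sum>k<m. ?q ^ k)) + (\<Sum>m\<le>N. (if m = 0 then 0 else ?q ^ (m - 1)) * ?P m)"
    by (simp only: sum_tails_swap sum_shift_Suc)
  also have "\<dots> = (\<Sum>m\<le>N. gagliardo_weight ?q m * ?P m)"
    unfolding gagliardo_weight_def distrib_right sum.distrib by (simp add: mult.commute)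
  finally show ?thesis .
qed

lemma Ns2_level_energy:
  "Ns2 s f = sqrt (\<Sum>m\<le>N. level_energy f m)
    + sqrt (\<Sum>m\<le>N. gagliardo_weight (2 powr (2 * s)) m * level_energy f m)"
  unfolding Ns2_def L2_norm2_def L2_eq_sum_level_energy gagliardo_integral_level_energy ..

lemma Hs_norm2_level_energy:
  "Hs_norm2 s f = sqrt (\<Sum>n\<le>N. (1 + (if n = 0 then 0 else 2 ^ n)) powr (2 * s) * level_energy f n)"
proof -
  let ?g = "\<lambda>l. (1 + lam_abs2 l) powr (2 * s) * (cmod (fourier2 f l))\<^sup>2"
  have "(\<Sum>\<^sub>\<infinity>l\<in>Lambda2. ?g l) = (\<Sum>\<^sub>\<infinity>l\<in>Sigma {..N} odd_numerators. ?g l)"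
  proof (rule infsum_cong_neutral)
    fix l assume "l \<in> Lambda2 - Sigma {..N} odd_numerators"
    then show "?g l = 0"
      by (cases l) (auto simp: Lambda2_eq_Sigma fourier2_top)
  qed (auto simp: Lambda2_eq_Sigma)
  also have "\<dots> = (\<Sum>l\<in>Sigma {..N} odd_numerators. ?g l)"
    by (rule infsum_finite) auto
  also have "\<dots> = (\<Sum>n\<le>N. \<Sum>a\<in>odd_numerators n. ?g (n, a))"
    by (subst sum.Sigma) (auto simp: case_prod_beta)
  also have "\<dots> = (\<Sum>n\<le>N. (1 + (if n = 0 then 0 else 2 ^ n)) powr (2 * s) * level_energy f n)"
    unfolding level_energy_def sum_distrib_left by (intro sum.cong refl) (simp add: lam_abs2_def)
  finally show ?thesis
    unfolding Hs_norm2_def by simp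
qed

end

theorem propositionB4:
  fixes s :: real
  assumes "s > 0"
  shows "\<exists>c C. c > 0 \<and> C > 0 \<and>
    (\<forall>f :: Z2 \<Rightarrow> complex. locally_constant2 f \<longrightarrow>
       c * Ns2 s f \<le> Hs_norm2 s f \<and> Hs_norm2 s f \<le> C * Ns2 s f)"
proof -
  define q where "q = (2::real) powr (2 * s)"
  define K where "K = 2 + 1 / (q - 1)"
  have "q > 1"
    unfolding q_def using assms by (intro gr_one_powr) auto
  then have "K > 0"
    by (simp add: K_def add_pos_nonneg)
  show ?thesis
  proof (intro exI conjI allI impI)
    fix f :: "Z2 \<Rightarrow> complex"
    assume "locally_constant2 f"
    then obtain N where N: "depends_on_digits N f"
      by (rule locally_constant2_depends_on_digits)
    note comparable = sqrt_weighted_sums_comparable[where A = "{..N}" and P = "level_energy f",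
        OF level_energy_nonneg gagliardo_weight_nonneg
        gagliardo_weight_comparable[OF assms, folded q_def K_def] \<open>K > 0\<close>]
    show "1 / sqrt (2 * K) * Ns2 s f \<le> Hs_norm2 s f" and "Hs_norm2 s f \<le> q * Ns2 s f"
      unfolding Ns2_level_energy[OF N] Hs_norm2_level_energy[OF N]
      using comparable \<open>q > 1\<close> by (simp_all add: q_def)
  qed (use \<open>K > 0\<close> \<open>q > 1\<close> in auto)
qed

end
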